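(* Let $f$ be a smooth function on an open planar set whose graph is an indefinite improper affine sphere with affine normal $(0,0,1)$ (equivalently $\det D^2f=-1$) and strictly positive Pick invariant. Let $p(u,v)$ be a planar parameterization by asymptotic parameters, i.e. $D^2f(p_u,p_u)=D^2f(p_v,p_v)=0$, oriented so that $D^2f(p_u,p_v)=[p_u,p_v]$. Then: (1) $D^2f\,p_u=R\,p_u$ and $D^2f\,p_v=-R\,p_v$; (2) setting $\pi_1(p)=p+R\nabla f(p)$ and $\pi_2(p)=p-R\nabla f(p)$, the map $\pi_1\circ p$ is constant along each asymptotic line $v=v_0$ and $\pi_2\circ p$ is constant along each asymptotic line $u=u_0$.
   Context: $[X,Y]$ denotes the determinant of the $2\times 2$ matrix with columns $X,Y$; $R$ is the counterclockwise rotation by ninety degrees; $D^2f$ is the Hessian of $f$, used both as a bilinear form and as a matrix. Asymptotic parameters of the graph surface $q(u,v)=(p(u,v),f(p(u,v)))$ are parameters with $[q_u,q_v,q_{uu}]=[q_u,q_v,q_{vv}]=0$, which amounts to $D^2f(p_u,p_u)=D^2f(p_v,p_v)=0$. *)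

theory Defs
  imports "HOL-Analysis.Analysis"
begin

text \<open>Points of the plane are elements of real^2; coordinate 1 is the first
  (u resp. x) coordinate and coordinate 2 the second.\<close>

definition partial :: "2 \<Rightarrow> (real^2 \<Rightarrow> real) \<Rightarrow> real^2 \<Rightarrow> real" where
  "partial i g x = frechet_derivative g (at x) (axis i 1)"

fun iter_partial :: "2 list \<Rightarrow> (real^2 \<Rightarrow> real) \<Rightarrow> real^2 \<Rightarrow> real" where
  "iter_partial [] g = g"
| "iter_partial (i # is) g = partial i (iter_partial is g)"

definition smooth_on :: "(real^2) set \<Rightarrow> (real^2 \<Rightarrow> real) \<Rightarrow> bool" where
  "smooth_on U g \<longleftrightarrow> (\<forall>is. iter_partial is g differentiable_on U)"

definition vsmooth_on :: "(real^2) set \<Rightarrow> (real^2 \<Rightarrow> real^2) \<Rightarrow> bool" where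
  "vsmooth_on U p \<longleftrightarrow> (\<forall>k. smooth_on U (\<lambda>x. p x $ k))"

definition vpartial :: "2 \<Rightarrow> (real^2 \<Rightarrow> real^2) \<Rightarrow> real^2 \<Rightarrow> real^2" where
  "vpartial i p x = frechet_derivative p (at x) (axis i 1)"

definition gradient2 :: "(real^2 \<Rightarrow> real) \<Rightarrow> real^2 \<Rightarrow> real^2" where
  "gradient2 f x = (\<chi> i. partial i f x)"

definition hessian :: "(real^2 \<Rightarrow> real) \<Rightarrow> real^2 \<Rightarrow> real^2^2" where
  "hessian f x = (\<chi> i j. iter_partial [i, j] f x)"

definition hess_form :: "(real^2 \<Rightarrow> real) \<Rightarrow> real^2 \<Rightarrow> real^2 \<Rightarrow> real^2 \<Rightarrow> real" where
  "hess_form f x X Y = X \<bullet> (hessian f x *v Y)"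

definition rot :: "real^2 \<Rightarrow> real^2" where
  "rot X = vector [- (X $ 2), X $ 1]"

definition bracket :: "real^2 \<Rightarrow> real^2 \<Rightarrow> real" where
  "bracket X Y = det (\<chi> i j. if j = 1 then X $ i else Y $ i :: real^2^2)"

text \<open>Pick invariant of the graph of f when det D^2 f = -1 (affine normal (0,0,1)):
  the Blaschke metric is h = D^2 f and the cubic form is C = D^3 f, and
  J = 1/(n(n-1)) h^{il} h^{jm} h^{kn} C_{ijk} C_{lmn} with n = 2.\<close>
definition pick_invariant :: "(real^2 \<Rightarrow> real) \<Rightarrow> real^2 \<Rightarrow> real" where
  "pick_invariant f x =
     (let Hi = matrix_inv (hessian f x) in
      (1/2) * (\<Sum>i\<in>UNIV. \<Sum>j\<in>UNIV. \<Sum>k\<in>UNIV. \<Sum>l\<in>UNIV. \<Sum>m\<in>UNIV. \<Sum>n\<in>UNIV.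
        Hi $ i $ l * Hi $ j $ m * Hi $ k $ n *
        iter_partial [i, j, k] f x * iter_partial [l, m, n] f x))"

definition pi1 :: "(real^2 \<Rightarrow> real) \<Rightarrow> real^2 \<Rightarrow> real^2" where
  "pi1 f y = y + rot (gradient2 f y)"

definition pi2 :: "(real^2 \<Rightarrow> real) \<Rightarrow> real^2 \<Rightarrow> real^2" where
  "pi2 f y = y - rot (gradient2 f y)"

end

theory Submission
  imports Defs
begin

text \<open>Write \<open>H = D\<^sup>2f(p)\<close>, \<open>a = p\<^sub>u\<close>, \<open>b = p\<^sub>v\<close>. The identity
  \<open>(a\<bullet>Ha)(b\<bullet>Hb) - (a\<bullet>Hb)(b\<bullet>Ha) = [a,b]\<^sup>2 det H\<close> together with the asymptotic
  conditions and \<open>det H = -1\<close> forces \<open>b\<bullet>Ha = a\<bullet>Hb = [a,b]\<close>. Since \<open>y\<bullet>Rx = [x,y]\<close>,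
  the vectors \<open>Ha - Ra\<close> and \<open>Hb + Rb\<close> are then orthogonal to the frame \<open>a, b\<close>,
  hence zero; the same holds for the transpose of \<open>H\<close>. For part (2), the derivative
  of \<open>\<pi>\<^sub>1 \<circ> p\<close> in the \<open>u\<close>-direction is \<open>a + R(Ha) = a + RRa = 0\<close>, so \<open>\<pi>\<^sub>1 \<circ> p\<close>
  is constant along \<open>u\<close>-segments; symmetrically for \<open>\<pi>\<^sub>2 \<circ> p\<close> and \<open>v\<close>-segments.\<close>

lemma vec2_eq_iff: "(x::'a^2) = y \<longleftrightarrow> x$1 = y$1 \<and> x$2 = y$2"
  by (simp add: vec_eq_iff forall_2)

lemma bracket_2: "bracket x y = x$1 * y$2 - y$1 * x$2"
  by (simp add: bracket_def det_2)

lemma inner_rot: "y \<bullet> rot x = bracket x y"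
  by (simp add: rot_def bracket_2 inner_vec_def sum_2)

lemma linear_rot: "linear rot"
  by (rule linearI) (simp_all add: rot_def vec2_eq_iff)

lemma rot_rot: "rot (rot x) = - x"
  by (simp add: rot_def vec2_eq_iff)

lemma eq_0_if_orthogonal_frame:
  fixes a b x :: "real^2"
  assumes "bracket a b \<noteq> 0" "a \<bullet> x = 0" "b \<bullet> x = 0"
  shows "x = 0"
proof -
  have "bracket a b * x$1 = 0" "bracket a b * x$2 = 0"
    using assms(2,3) by (simp_all add: bracket_2 inner_vec_def sum_2) algebra+
  then show ?thesis using assms(1) by (simp add: vec2_eq_iff)
qed

lemma bilinear_det_identity:
  fixes H :: "real^2^2" and a b :: "real^2"
  shows "(a \<bullet> (H *v a)) * (b \<bullet> (H *v b)) - (a \<bullet> (H *v b)) * (b \<bullet> (H *v a))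
    = (bracket a b)^2 * det H"
  by (simp add: bracket_2 det_2 inner_vec_def matrix_vector_mult_def sum_2) algebra

lemma null_frame_cross_terms_eq:
  fixes H :: "real^2^2" and a b :: "real^2"
  assumes "det H = -1" "a \<bullet> (H *v a) = 0" "b \<bullet> (H *v b) = 0"
    "a \<bullet> (H *v b) = bracket a b" "bracket a b \<noteq> 0"
  shows "b \<bullet> (H *v a) = bracket a b"
proof -
  have "- (bracket a b * (b \<bullet> (H *v a))) = - (bracket a b * bracket a b)"
    using bilinear_det_identity[of a H b] assms(1-4) by (simp add: power2_eq_square)
  then show ?thesis using assms(5) by simp
qed

lemma null_frame_eq_rot:
  fixes H :: "real^2^2" and a b :: "real^2"
  assumes "det H = -1" "a \<bullet> (H *v a) = 0" "b \<bullet> (H *v b) = 0"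
    "a \<bullet> (H *v b) = bracket a b" "bracket a b \<noteq> 0"
  shows "H *v a = rot a" "H *v b = - rot b"
proof -
  have "b \<bullet> (H *v a) = bracket a b" using null_frame_cross_terms_eq assms .
  then have "H *v a - rot a = 0"
    using assms(2,5) by (intro eq_0_if_orthogonal_frame[of a b])
      (simp_all add: inner_diff_right inner_rot bracket_2)
  then show "H *v a = rot a" by simp
  have "H *v b + rot b = 0"
    using assms(3-5) by (intro eq_0_if_orthogonal_frame[of a b])
      (simp_all add: inner_add_right inner_rot bracket_2)
  then show "H *v b = - rot b" by (simp add: eq_neg_iff_add_eq_0)
qed

lemma null_frame_eq_rot_transpose:
  fixes H :: "real^2^2" and a b :: "real^2"
  assumes "det H = -1" "a \<bullet> (H *v a) = 0" "b \<bullet> (H *v b) = 0"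
    "a \<bullet> (H *v b) = bracket a b" "bracket a b \<noteq> 0"
  shows "transpose H *v a = rot a" "transpose H *v b = - rot b"
proof -
  have transpose_form: "x \<bullet> (transpose H *v y) = y \<bullet> (H *v x)" for x y
    by (metis dot_lmul_matrix inner_commute vector_transpose_matrix)
  have "det (transpose H) = -1" "a \<bullet> (transpose H *v a) = 0" "b \<bullet> (transpose H *v b) = 0"
    "a \<bullet> (transpose H *v b) = bracket a b"
    using assms null_frame_cross_terms_eq[OF assms] by (simp_all only: transpose_form det_transpose)
  then show "transpose H *v a = rot a" "transpose H *v b = - rot b"
    using null_frame_eq_rot assms(5) by blast+
qed

lemma has_derivative_apply_eq_partials:
  assumes "(g has_derivative g') (at x)"
  shows "g' y = y$1 * partial 1 g x + y$2 * partial 2 g x"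
proof -
  have decomp: "y = y$1 *\<^sub>R axis 1 1 + y$2 *\<^sub>R axis 2 1"
    by (simp add: vec2_eq_iff axis_def)
  have "linear g'" using assms has_derivative_linear by blast
  then have "g' y = y$1 * g' (axis 1 1) + y$2 * g' (axis 2 1)"
    by (subst (1) decomp) (simp add: linear_add linear_scale)
  then show ?thesis
    using assms by (simp add: partial_def frechet_derivative_at[OF assms, symmetric])
qed

lemma smooth_on_differentiable_at:
  assumes "open U" "smooth_on U g" "x \<in> U"
  shows "iter_partial is g differentiable at x"
  using assms unfolding smooth_on_def by (meson differentiable_on_eq_differentiable_at)

lemma vsmooth_on_has_derivative:
  assumes "open W" "vsmooth_on W p" "w \<in> W"
  shows "(p has_derivative frechet_derivative p (at w)) (at w)"
proof -
  have "(\<lambda>x. p x $ k) differentiable at w" for k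
    using smooth_on_differentiable_at[OF assms(1) _ assms(3), of "\<lambda>x. p x $ k" "[]"] assms(2)
    unfolding vsmooth_on_def by simp
  then have "p differentiable at w"
    by (subst differentiable_componentwise_within) (auto simp: Basis_vec_def cart_eq_inner_axis)
  then show ?thesis by (simp add: frechet_derivative_works)
qed

text \<open>The partials are only differentiable, so \<open>hessian\<close> need not be symmetric: the Jacobian
  of the gradient is its transpose, which is why \<open>null_frame_eq_rot_transpose\<close> is needed.\<close>

lemma gradient2_has_derivative:
  assumes "open U" "smooth_on U f" "x \<in> U"
  shows "(gradient2 f has_derivative (\<lambda>y. transpose (hessian f x) *v y)) (at x)"
proof -
  have "((\<lambda>x. gradient2 f x $ i) has_derivative (\<lambda>y. (transpose (hessian f x) *v y) $ i)) (at x)" for i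
  proof -
    have "iter_partial [i] f differentiable at x"
      using smooth_on_differentiable_at[OF assms] .
    then have D: "(partial i f has_derivative frechet_derivative (partial i f) (at x)) (at x)"
      by (simp add: frechet_derivative_works)
    have "frechet_derivative (partial i f) (at x) = (\<lambda>y. (transpose (hessian f x) *v y) $ i)"
      using has_derivative_apply_eq_partials[OF D]
      by (auto simp: matrix_vector_mult_def transpose_def hessian_def sum_2 mult.commute)
    with D show ?thesis by (simp add: gradient2_def)
  qed
  then show ?thesis
    by (subst has_derivative_componentwise_within) (auto simp: Basis_vec_def cart_eq_inner_axis)
qed

lemma rot_gradient2_comp_has_derivative:
  assumes "open U" "smooth_on U f" "open W" "vsmooth_on W p" "p ` W \<subseteq> U" "w \<in> W"
  shows "((\<lambda>y. rot (gradient2 f (p y))) has_derivative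
           (\<lambda>h. rot (transpose (hessian f (p w)) *v frechet_derivative p (at w) h))) (at w)"
proof -
  have "p w \<in> U" using assms(5,6) by blast
  have "((gradient2 f \<circ> p) has_derivative
          (\<lambda>y. transpose (hessian f (p w)) *v y) \<circ> frechet_derivative p (at w)) (at w)"
    by (rule diff_chain_at[OF vsmooth_on_has_derivative[OF assms(3,4,6)]
          gradient2_has_derivative[OF assms(1,2) \<open>p w \<in> U\<close>]])
  from bounded_linear.has_derivative[OF linear_conv_bounded_linear[THEN iffD1, OF linear_rot] this]
  show ?thesis by (simp add: o_def)
qed

lemma eq_if_derivative_vanishes_along_segment:
  fixes G :: "'a::real_normed_vector \<Rightarrow> 'b::real_normed_vector"
  assumes "\<And>x. x \<in> closed_segment a b \<Longrightarrow> (G has_derivative G' x) (at x)"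
    and "\<And>x. x \<in> closed_segment a b \<Longrightarrow> G' x (b - a) = 0"
  shows "G a = G b"
proof -
  define z where "z s = a + s *\<^sub>R (b - a)" for s :: real
  have z_in: "z s \<in> closed_segment a b" if "s \<in> {0..1}" for s
    using that unfolding closed_segment_def z_def by (auto intro!: exI[of _ s] simp: algebra_simps)
  have G_z_derivative: "((G \<circ> z) has_derivative (\<lambda>t. 0)) (at s within {0..1})"
    if s: "s \<in> {0..1}" for s
  proof -
    have "(z has_derivative (\<lambda>t. t *\<^sub>R (b - a))) (at s within {0..1})"
      unfolding z_def by (auto intro!: derivative_eq_intros)
    then have "((G \<circ> z) has_derivative G' (z s) \<circ> (\<lambda>t. t *\<^sub>R (b - a))) (at s within {0..1})"
      using diff_chain_within has_derivative_at_withinI[OF assms(1)[OF z_in[OF s]]] by blast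
    moreover have "G' (z s) (t *\<^sub>R (b - a)) = 0" for t
      using linear_scale[OF has_derivative_linear[OF assms(1)[OF z_in[OF s]]]]
        assms(2)[OF z_in[OF s]] by simp
    ultimately show ?thesis by (simp add: o_def)
  qed
  have "(G \<circ> z) 0 = (G \<circ> z) 1"
    by (rule has_derivative_zero_unique[OF convex_real_interval(5) G_z_derivative]) auto
  then show ?thesis by (simp add: z_def)
qed

lemma eq_along_axis_segment:
  fixes G :: "real^'n \<Rightarrow> 'b::real_normed_vector"
  assumes "closed_segment a b \<subseteq> W" "b - a = t *\<^sub>R axis i 1"
    and "\<And>w. w \<in> W \<Longrightarrow> (G has_derivative G' w) (at w)"
    and "\<And>w. w \<in> W \<Longrightarrow> G' w (axis i 1) = 0"
  shows "G a = G b"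
proof (rule eq_if_derivative_vanishes_along_segment[where G' = G'])
  fix w assume "w \<in> closed_segment a b"
  with assms(1) have "w \<in> W" by blast
  show "(G has_derivative G' w) (at w)" by (rule assms(3)[OF \<open>w \<in> W\<close>])
  show "G' w (b - a) = 0"
    using linear_scale[OF has_derivative_linear[OF assms(3)[OF \<open>w \<in> W\<close>]]]
      assms(2,4) \<open>w \<in> W\<close> by simp
qed

lemma pi1_comp_has_derivative:
  assumes "open U" "smooth_on U f" "open W" "vsmooth_on W p" "p ` W \<subseteq> U" "w \<in> W"
  shows "((\<lambda>y. pi1 f (p y)) has_derivative
           (\<lambda>h. frechet_derivative p (at w) h
                + rot (transpose (hessian f (p w)) *v frechet_derivative p (at w) h))) (at w)"
  unfolding pi1_def
  by (intro has_derivative_add vsmooth_on_has_derivative[OF assms(3,4,6)]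
      rot_gradient2_comp_has_derivative[OF assms])

lemma pi2_comp_has_derivative:
  assumes "open U" "smooth_on U f" "open W" "vsmooth_on W p" "p ` W \<subseteq> U" "w \<in> W"
  shows "((\<lambda>y. pi2 f (p y)) has_derivative
           (\<lambda>h. frechet_derivative p (at w) h
                - rot (transpose (hessian f (p w)) *v frechet_derivative p (at w) h))) (at w)"
  unfolding pi2_def
  by (intro has_derivative_diff vsmooth_on_has_derivative[OF assms(3,4,6)]
      rot_gradient2_comp_has_derivative[OF assms])

theorem mainTheorem4:
  fixes f :: "real^2 \<Rightarrow> real" and U :: "(real^2) set"
    and p :: "real^2 \<Rightarrow> real^2" and W :: "(real^2) set"
  assumes U_open: "open U"
    and f_smooth: "smooth_on U f"
    and affine_sphere: "\<forall>x\<in>U. det (hessian f x) = -1"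
    and pick_pos: "\<forall>x\<in>U. pick_invariant f x > 0"
    and W_open: "open W"
    and p_smooth: "vsmooth_on W p"
    and p_into: "p ` W \<subseteq> U"
    and p_regular: "\<forall>w\<in>W. bracket (vpartial 1 p w) (vpartial 2 p w) \<noteq> 0"
    and asym_u: "\<forall>w\<in>W. hess_form f (p w) (vpartial 1 p w) (vpartial 1 p w) = 0"
    and asym_v: "\<forall>w\<in>W. hess_form f (p w) (vpartial 2 p w) (vpartial 2 p w) = 0"
    and orient: "\<forall>w\<in>W. hess_form f (p w) (vpartial 1 p w) (vpartial 2 p w)
                        = bracket (vpartial 1 p w) (vpartial 2 p w)"
  shows "(\<forall>w\<in>W. hessian f (p w) *v vpartial 1 p w = rot (vpartial 1 p w)
               \<and> hessian f (p w) *v vpartial 2 p w = - rot (vpartial 2 p w))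
       \<and> (\<forall>u1 u2 v0. closed_segment (vector [u1, v0]) (vector [u2, v0]) \<subseteq> W \<longrightarrow>
            pi1 f (p (vector [u1, v0])) = pi1 f (p (vector [u2, v0])))
       \<and> (\<forall>u0 v1 v2. closed_segment (vector [u0, v1]) (vector [u0, v2]) \<subseteq> W \<longrightarrow>
            pi2 f (p (vector [u0, v1])) = pi2 f (p (vector [u0, v2])))"
proof -
  have null_frame: "det (hessian f (p w)) = -1"
    "vpartial 1 p w \<bullet> (hessian f (p w) *v vpartial 1 p w) = 0"
    "vpartial 2 p w \<bullet> (hessian f (p w) *v vpartial 2 p w) = 0"
    "vpartial 1 p w \<bullet> (hessian f (p w) *v vpartial 2 p w)
       = bracket (vpartial 1 p w) (vpartial 2 p w)"
    "bracket (vpartial 1 p w) (vpartial 2 p w) \<noteq> 0" if "w \<in> W" for w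
    using that p_into affine_sphere asym_u asym_v orient p_regular by (auto simp: hess_form_def)
  note frame = null_frame_eq_rot[OF null_frame] and
    frame_transpose = null_frame_eq_rot_transpose[OF null_frame, unfolded vpartial_def]
  note smooth_data = U_open f_smooth W_open p_smooth p_into
  have "pi1 f (p a) = pi1 f (p b)"
    if "closed_segment a b \<subseteq> W" "b - a = t *\<^sub>R axis 1 1" for a b t
    by (rule eq_along_axis_segment[OF that pi1_comp_has_derivative[OF smooth_data]])
      (simp_all add: frame_transpose[simplified] rot_rot)
  moreover have "pi2 f (p a) = pi2 f (p b)"
    if "closed_segment a b \<subseteq> W" "b - a = t *\<^sub>R axis 2 1" for a b t
    by (rule eq_along_axis_segment[OF that pi2_comp_has_derivative[OF smooth_data]])
      (simp_all add: frame_transpose[simplified] rot_rot linear_neg[OF linear_rot])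
  ultimately show ?thesis
    using frame by (simp add: vec2_eq_iff axis_def)
qed

end
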